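(* Assume $\alpha=\beta\ge2$ and let $(U,V,\Lambda)$ be the similarity profile. Then for every $\tau\ge0$ and all measurable $\rho,\zeta:\mathbb R\to(0,\infty)$ for which $\mathcal I_\Lambda(\rho,\zeta)$ is finite, $$\mathcal I_\Lambda(\rho,\zeta)-e^\tau\mathcal D_{\mathrm{react}}(\rho,\zeta)\le K_2\,e^{-\tau/(\alpha-1)},\qquad K_2:=\frac{\tilde c_\alpha}{k^{1/(\alpha-1)}}\int_{\mathbb R}\Big|\frac{\alpha\Lambda(y)}{U(y)}\Big|^{\alpha/(\alpha-1)}\mathrm dy,$$ with $\tilde c_\alpha=\big(\tfrac{2}{\alpha^2}\big)^{1/(\alpha-1)}\tfrac{\alpha-1}{\alpha}$.
   Context: Fix $d_1,d_2,k>0$, real stoichiometric coefficients $\alpha,\beta\ge1$ and $A_-,A_+>0$. The similarity profile is a triple $(U,V,\Lambda)$ with $U,V\in\mathrm C^2(\mathbb R)$ positive, bounded and bounded away from $0$, $\Lambda:\mathbb R\to\mathbb R$, satisfying $d_1U''+\tfrac y2U'+\alpha\Lambda=0$, $d_2V''+\tfrac y2V'-\beta\Lambda=0$, $U^\alpha=V^\beta$ on $\mathbb R$, and $U(\pm\infty)=A_\pm^\beta$, $V(\pm\infty)=A_\pm^\alpha$. $\Gamma(a,b)=(a-b)(\log a-\log b)$ for $a,b>0$, $\Gamma(0,0)=0$, $\Gamma(0,c)=\Gamma(c,0)=\infty$ for $c>0$. Reactive dissipation $\mathcal D_{\mathrm{react}}(\rho,\zeta)=\int_{\mathbb R}kU^\alpha\,\Gamma(\rho^\alpha,\zeta^\beta)\,\mathrm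 dy$. Mixed term $\mathcal I_\Lambda(\rho,\zeta)=\int_{\mathbb R}\big((1-\rho)\alpha-(1-\zeta)\beta\big)\Lambda\,\mathrm dy$. *)

theory Defs
  imports "HOL-Analysis.Analysis"
begin

definition C2 :: "(real \<Rightarrow> real) \<Rightarrow> bool" where
  "C2 f \<longleftrightarrow> (\<exists>f' f''. (\<forall>y. (f has_real_derivative f' y) (at y)) \<and>
      (\<forall>y. (f' has_real_derivative f'' y) (at y)) \<and> continuous_on UNIV f'')"

definition similarity_profile ::
  "real \<Rightarrow> real \<Rightarrow> real \<Rightarrow> real \<Rightarrow> real \<Rightarrow> real \<Rightarrow>
   (real \<Rightarrow> real) \<Rightarrow> (real \<Rightarrow> real) \<Rightarrow> (real \<Rightarrow> real) \<Rightarrow> bool" where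
  "similarity_profile d1 d2 \<alpha> \<beta> Am Ap U V \<Lambda> \<longleftrightarrow>
     C2 U \<and> C2 V \<and>
     (\<forall>y. U y > 0 \<and> V y > 0) \<and>
     bounded (range U) \<and> bounded (range V) \<and>
     (\<exists>c>0. \<forall>y. c \<le> U y \<and> c \<le> V y) \<and>
     (\<forall>y. d1 * deriv (deriv U) y + y / 2 * deriv U y + \<alpha> * \<Lambda> y = 0) \<and>
     (\<forall>y. d2 * deriv (deriv V) y + y / 2 * deriv V y - \<beta> * \<Lambda> y = 0) \<and>
     (\<forall>y. U y powr \<alpha> = V y powr \<beta>) \<and>
     (U \<longlongrightarrow> Ap powr \<beta>) at_top \<and> (U \<longlongrightarrow> Am powr \<beta>) at_bot \<and>
     (V \<longlongrightarrow> Ap powr \<alpha>) at_top \<and> (V \<longlongrightarrow> Am powr \<alpha>) at_bot"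

text \<open>Gamma(a,b) = (a-b)(log a - log b), extended by Gamma(0,0)=0 and infinity otherwise
  (values for negative arguments are irrelevant here and set to infinity).\<close>
definition Gam :: "real \<Rightarrow> real \<Rightarrow> ennreal" where
  "Gam a b = (if a > 0 \<and> b > 0 then ennreal ((a - b) * (ln a - ln b))
              else if a = 0 \<and> b = 0 then 0 else \<infinity>)"

definition D_react ::
  "real \<Rightarrow> real \<Rightarrow> real \<Rightarrow> (real \<Rightarrow> real) \<Rightarrow> (real \<Rightarrow> real) \<Rightarrow> (real \<Rightarrow> real) \<Rightarrow> ennreal" where
  "D_react k \<alpha> \<beta> U \<rho> \<zeta> =
     (\<integral>\<^sup>+ y. ennreal (k * U y powr \<alpha>) * Gam (\<rho> y powr \<alpha>) (\<zeta> y powr \<beta>) \<partial>lborel)"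

definition I_Lambda_integrand ::
  "real \<Rightarrow> real \<Rightarrow> (real \<Rightarrow> real) \<Rightarrow> (real \<Rightarrow> real) \<Rightarrow> (real \<Rightarrow> real) \<Rightarrow> real \<Rightarrow> real" where
  "I_Lambda_integrand \<alpha> \<beta> \<Lambda> \<rho> \<zeta> y = ((1 - \<rho> y) * \<alpha> - (1 - \<zeta> y) * \<beta>) * \<Lambda> y"

definition I_Lambda ::
  "real \<Rightarrow> real \<Rightarrow> (real \<Rightarrow> real) \<Rightarrow> (real \<Rightarrow> real) \<Rightarrow> (real \<Rightarrow> real) \<Rightarrow> real" where
  "I_Lambda \<alpha> \<beta> \<Lambda> \<rho> \<zeta> = (\<integral>y. I_Lambda_integrand \<alpha> \<beta> \<Lambda> \<rho> \<zeta> y \<partial>lborel)"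

definition c_tilde :: "real \<Rightarrow> real" where
  "c_tilde \<alpha> = (2 / \<alpha>\<^sup>2) powr (1 / (\<alpha> - 1)) * ((\<alpha> - 1) / \<alpha>)"

definition K2 :: "real \<Rightarrow> real \<Rightarrow> (real \<Rightarrow> real) \<Rightarrow> (real \<Rightarrow> real) \<Rightarrow> ennreal" where
  "K2 k \<alpha> U \<Lambda> = ennreal (c_tilde \<alpha> / k powr (1 / (\<alpha> - 1))) *
     (\<integral>\<^sup>+ y. ennreal (\<bar>\<alpha> * \<Lambda> y / U y\<bar> powr (\<alpha> / (\<alpha> - 1))) \<partial>lborel)"

end

theory Submission
  imports Defs
begin

text \<open>Pointwise, the mixed integrand is \<open>\<alpha> (\<zeta> - \<rho>) \<Lambda>\<close>. Young's inequality with exponents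
  \<open>\<alpha>\<close> and \<open>\<alpha>/(\<alpha>-1)\<close> splits it into \<open>exp \<tau> k U^\<alpha> \<alpha> |\<rho> - \<zeta>|^\<alpha>\<close> plus a remainder
  \<open>c_tilde \<alpha> k^(-1/(\<alpha>-1)) exp(-\<tau>/(\<alpha>-1)) |\<alpha> \<Lambda> / U|^(\<alpha>/(\<alpha>-1))\<close>, and the elementary inequality
  \<open>|a - b|^\<alpha> \<le> (a^\<alpha> - b^\<alpha>) (ln a - ln b)\<close> for \<open>\<alpha> \<ge> 2\<close> bounds the first term by the reactive
  dissipation density \<open>exp \<tau> k U^\<alpha> \<Gamma>(\<rho>^\<alpha>, \<zeta>^\<alpha>)\<close>.\<close>

lemma powr_diff_mult_ln_diff_ge:
  fixes a b \<alpha> :: real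
  assumes "0 < b" "b \<le> a" "2 \<le> \<alpha>"
  shows "(a - b) powr \<alpha> \<le> (a powr \<alpha> - b powr \<alpha>) * (ln a - ln b)"
proof -
  have "0 < a" using assms by linarith
  have "b powr \<alpha> = b * b powr (\<alpha> - 1)"
    using assms by (simp add: powr_mult_base)
  also have "\<dots> \<le> b * a powr (\<alpha> - 1)"
    using assms by (intro mult_left_mono powr_mono2) auto
  finally have "b powr \<alpha> \<le> b * a powr (\<alpha> - 1)" .
  then have pow: "a powr (\<alpha> - 1) * (a - b) \<le> a powr \<alpha> - b powr \<alpha>"
    using \<open>0 < a\<close> by (simp add: powr_mult_base algebra_simps)
  have "ln (b / a) \<le> b / a - 1"
    using assms \<open>0 < a\<close> by (intro ln_le_minus_one) auto
  then have log: "(a - b) / a \<le> ln a - ln b"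
    using assms \<open>0 < a\<close> by (simp add: ln_div diff_divide_distrib)
  have "(a - b) powr \<alpha> = (a - b) powr (\<alpha> - 2) * (a - b)\<^sup>2"
    using assms powr_add[of "a - b" "\<alpha> - 2" 2] by (cases "a = b") simp_all
  also have "\<dots> \<le> a powr (\<alpha> - 2) * (a - b)\<^sup>2"
    using assms by (intro mult_right_mono powr_mono2) auto
  also have "\<dots> = (a powr (\<alpha> - 1) * (a - b)) * ((a - b) / a)"
  proof -
    have "a powr (\<alpha> - 1) = a * a powr (\<alpha> - 2)"
      using \<open>0 < a\<close> powr_mult_base[of a "\<alpha> - 2"] by simp
    then show ?thesis using \<open>0 < a\<close> by (simp add: power2_eq_square field_simps)
  qed
  also have "\<dots> \<le> (a powr \<alpha> - b powr \<alpha>) * (ln a - ln b)"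
    using pow log assms powr_mono2[of \<alpha> b a] by (intro mult_mono) auto
  finally show ?thesis .
qed

lemma abs_diff_powr_le_powr_diff_mult_ln_diff:
  fixes a b \<alpha> :: real
  assumes "0 < a" "0 < b" "2 \<le> \<alpha>"
  shows "\<bar>a - b\<bar> powr \<alpha> \<le> (a powr \<alpha> - b powr \<alpha>) * (ln a - ln b)"
  using powr_diff_mult_ln_diff_ge[of b a \<alpha>] powr_diff_mult_ln_diff_ge[of a b \<alpha>] assms
  by (cases "b \<le> a") (auto simp: algebra_simps abs_if)

lemma diff_mult_ln_diff_nonneg:
  fixes a b :: real
  assumes "0 < a" "0 < b"
  shows "0 \<le> (a - b) * (ln a - ln b)"
  using assms by (cases "a \<le> b") (auto intro: mult_nonpos_nonpos mult_nonneg_nonneg)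

lemma Youngs_inequality_eps:
  fixes p \<epsilon> t A :: real
  assumes "1 < p" "0 < \<epsilon>" "0 \<le> t" "0 \<le> A"
  shows "t * A \<le> \<epsilon> * t powr p + (p - 1) / p * (p * \<epsilon>) powr (- 1 / (p - 1)) * A powr (p / (p - 1))"
proof -
  define s where "s = (p * \<epsilon>) powr (1 / p)"
  have "0 < s" using assms by (simp add: s_def)
  have "(t * s) * (A / s) \<le> (t * s) powr p / p + (A / s) powr (p / (p - 1)) / (p / (p - 1))"
    using assms \<open>0 < s\<close> by (intro Youngs_inequality) (auto simp: field_simps)
  also have "(t * s) powr p / p = \<epsilon> * t powr p"
    using assms by (simp add: s_def powr_mult powr_powr)
  also have "(A / s) powr (p / (p - 1)) / (p / (p - 1))
      = (p - 1) / p * (p * \<epsilon>) powr (- 1 / (p - 1)) * A powr (p / (p - 1))"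
    using assms by (simp add: s_def powr_divide powr_powr powr_minus_divide mult_ac)
  finally show ?thesis using \<open>0 < s\<close> by simp
qed

text \<open>The factor \<open>2\<close> in \<open>c_tilde\<close> is slack: Young's constant only needs \<open>(1/\<alpha>\<^sup>2) powr (1/(\<alpha>-1))\<close>.\<close>

lemma Young_constant_le_c_tilde:
  fixes \<alpha> k u A \<tau> :: real
  assumes "2 \<le> \<alpha>" "0 < k" "0 < u" "0 \<le> A"
  shows "(\<alpha> - 1) / \<alpha> * (\<alpha> * (\<alpha> * (exp \<tau> * k * u powr \<alpha>))) powr (- 1 / (\<alpha> - 1)) * A powr (\<alpha> / (\<alpha> - 1))
    \<le> c_tilde \<alpha> / k powr (1 / (\<alpha> - 1)) * exp (- \<tau> / (\<alpha> - 1)) * (A / u) powr (\<alpha> / (\<alpha> - 1))"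
proof -
  define e where "e = 1 / (\<alpha> - 1)"
  define X where "X = exp (- \<tau> / (\<alpha> - 1)) / k powr e * (A / u) powr (\<alpha> / (\<alpha> - 1))"
  have "0 \<le> X" by (simp add: X_def)
  have "(\<alpha> * (\<alpha> * (exp \<tau> * k * u powr \<alpha>))) powr (- 1 / (\<alpha> - 1)) * A powr (\<alpha> / (\<alpha> - 1))
      = (1 / \<alpha>\<^sup>2) powr e * X"
    using assms
    by (simp add: X_def e_def powr_mult powr_divide powr_powr powr_minus_divide exp_powr_real
        exp_minus power2_eq_square field_simps)
  also have "\<dots> \<le> (2 / \<alpha>\<^sup>2) powr e * X"
    using assms \<open>0 \<le> X\<close> by (intro mult_right_mono powr_mono2) (auto simp: e_def divide_simps)
  finally have "(\<alpha> - 1) / \<alpha> * ((\<alpha> * (\<alpha> * (exp \<tau> * k * u powr \<alpha>))) powr (- 1 / (\<alpha> - 1)) * A powr (\<alpha> / (\<alpha> - 1)))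
      \<le> (\<alpha> - 1) / \<alpha> * ((2 / \<alpha>\<^sup>2) powr e * X)"
    using assms by (intro mult_left_mono) auto
  then show ?thesis
    by (simp add: c_tilde_def X_def e_def mult_ac)
qed

lemma mixed_term_le_reaction_plus_remainder:
  fixes \<alpha> r z u k L \<tau> :: real
  assumes "2 \<le> \<alpha>" "0 < r" "0 < z" "0 < u" "0 < k"
  shows "((1 - r) * \<alpha> - (1 - z) * \<alpha>) * L
    \<le> exp \<tau> * (k * u powr \<alpha> * ((r powr \<alpha> - z powr \<alpha>) * (ln (r powr \<alpha>) - ln (z powr \<alpha>))))
      + c_tilde \<alpha> / k powr (1 / (\<alpha> - 1)) * exp (- \<tau> / (\<alpha> - 1)) * \<bar>\<alpha> * L / u\<bar> powr (\<alpha> / (\<alpha> - 1))"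
proof -
  define M where "M = exp \<tau> * k * u powr \<alpha>"
  have "0 < M" using assms by (simp add: M_def)
  have "((1 - r) * \<alpha> - (1 - z) * \<alpha>) * L \<le> \<bar>r - z\<bar> * \<bar>\<alpha> * L\<bar>"
    by (simp add: algebra_simps abs_mult[symmetric])
  also have "\<dots> \<le> \<alpha> * M * \<bar>r - z\<bar> powr \<alpha>
      + (\<alpha> - 1) / \<alpha> * (\<alpha> * (\<alpha> * M)) powr (- 1 / (\<alpha> - 1)) * \<bar>\<alpha> * L\<bar> powr (\<alpha> / (\<alpha> - 1))"
    using assms \<open>0 < M\<close> by (intro Youngs_inequality_eps) auto
  also have "\<alpha> * M * \<bar>r - z\<bar> powr \<alpha> \<le> \<alpha> * M * ((r powr \<alpha> - z powr \<alpha>) * (ln r - ln z))"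
    using assms \<open>0 < M\<close> abs_diff_powr_le_powr_diff_mult_ln_diff[of r z \<alpha>]
    by (intro mult_left_mono) auto
  also have "\<alpha> * M * ((r powr \<alpha> - z powr \<alpha>) * (ln r - ln z))
      = exp \<tau> * (k * u powr \<alpha> * ((r powr \<alpha> - z powr \<alpha>) * (ln (r powr \<alpha>) - ln (z powr \<alpha>))))"
    using assms by (simp add: M_def algebra_simps)
  also have "(\<alpha> - 1) / \<alpha> * (\<alpha> * (\<alpha> * M)) powr (- 1 / (\<alpha> - 1)) * \<bar>\<alpha> * L\<bar> powr (\<alpha> / (\<alpha> - 1))
      \<le> c_tilde \<alpha> / k powr (1 / (\<alpha> - 1)) * exp (- \<tau> / (\<alpha> - 1)) * \<bar>\<alpha> * L / u\<bar> powr (\<alpha> / (\<alpha> - 1))"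
    using Young_constant_le_c_tilde[of \<alpha> k u "\<bar>\<alpha> * L\<bar>" \<tau>] assms
    by (simp add: M_def)
  finally show ?thesis by simp
qed

lemma integral_minus_nn_integral_le:
  fixes f g h :: "'a \<Rightarrow> real"
  assumes "g \<in> borel_measurable M" "h \<in> borel_measurable M" "0 < c"
    and "\<And>x. 0 \<le> g x" "\<And>x. 0 \<le> h x" "\<And>x. f x \<le> c * g x + h x"
  shows "ereal (integral\<^sup>L M f) - ereal c * enn2ereal (\<integral>\<^sup>+ x. g x \<partial>M) \<le> enn2ereal (\<integral>\<^sup>+ x. h x \<partial>M)"
proof (cases "(\<integral>\<^sup>+ x. g x \<partial>M) = \<infinity> \<or> (\<integral>\<^sup>+ x. h x \<partial>M) = \<infinity>")
  case True
  then show ?thesis using \<open>0 < c\<close> by auto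
next
  case False
  then obtain G H where G: "(\<integral>\<^sup>+ x. g x \<partial>M) = ennreal G" "0 \<le> G"
    and H: "(\<integral>\<^sup>+ x. h x \<partial>M) = ennreal H" "0 \<le> H"
    by (cases "\<integral>\<^sup>+ x. g x \<partial>M"; cases "\<integral>\<^sup>+ x. h x \<partial>M") auto
  have "(\<integral>\<^sup>+ x. f x \<partial>M) \<le> (\<integral>\<^sup>+ x. ennreal c * g x + h x \<partial>M)"
  proof (rule nn_integral_mono)
    fix x
    have "ennreal (f x) \<le> ennreal (c * g x + h x)"
      using assms by (intro ennreal_leI) auto
    then show "ennreal (f x) \<le> ennreal c * g x + h x"
      using assms by (simp add: ennreal_mult)
  qed
  also have "\<dots> = ennreal (c * G + H)"
    using assms G H by (simp add: nn_integral_add nn_integral_cmult ennreal_mult)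
  finally have "integral\<^sup>L M f \<le> c * G + H"
    using assms G H by (intro integral_real_bounded) auto
  then show ?thesis using G H by simp
qed

lemma C2_continuous_on:
  assumes "C2 f"
  shows "continuous_on UNIV f" "continuous_on UNIV (deriv f)" "continuous_on UNIV (deriv (deriv f))"
proof -
  obtain f' f'' where f': "\<And>y. (f has_real_derivative f' y) (at y)"
    and f'': "\<And>y. (f' has_real_derivative f'' y) (at y)" and "continuous_on UNIV f''"
    using assms unfolding C2_def by blast
  have "deriv f = f'" "deriv f' = f''"
    using f' f'' DERIV_imp_deriv by blast+
  then show "continuous_on UNIV f" "continuous_on UNIV (deriv f)" "continuous_on UNIV (deriv (deriv f))"
    using f' f'' \<open>continuous_on UNIV f''\<close>
    by (auto intro!: continuous_at_imp_continuous_on DERIV_isCont)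
qed

lemma similarity_profile_borel_measurable:
  assumes "similarity_profile d1 d2 \<alpha> \<beta> Am Ap U V \<Lambda>" "\<alpha> \<noteq> 0"
  shows "U \<in> borel_measurable borel" "\<Lambda> \<in> borel_measurable borel"
proof -
  have "C2 U" and ode: "\<And>y. d1 * deriv (deriv U) y + y / 2 * deriv U y + \<alpha> * \<Lambda> y = 0"
    using assms(1) unfolding similarity_profile_def by blast+
  then have \<Lambda>_eq: "\<Lambda> = (\<lambda>y. - (d1 * deriv (deriv U) y + y / 2 * deriv U y) / \<alpha>)"
    using \<open>\<alpha> \<noteq> 0\<close> by (intro ext) (simp add: eq_divide_eq add_eq_0_iff mult.commute)
  have "U \<in> borel_measurable borel" "deriv U \<in> borel_measurable borel"
    "deriv (deriv U) \<in> borel_measurable borel"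
    using C2_continuous_on[OF \<open>C2 U\<close>] by (simp_all add: borel_measurable_continuous_onI)
  then show "U \<in> borel_measurable borel" "\<Lambda> \<in> borel_measurable borel"
    unfolding \<Lambda>_eq by measurable
qed

lemma D_react_eq_nn_integral:
  fixes k \<alpha> :: real and U \<rho> \<zeta> :: "real \<Rightarrow> real"
  assumes "0 \<le> k" "\<And>y. 0 < \<rho> y" "\<And>y. 0 < \<zeta> y"
  shows "D_react k \<alpha> \<alpha> U \<rho> \<zeta> = (\<integral>\<^sup>+ y. k * U y powr \<alpha>
           * ((\<rho> y powr \<alpha> - \<zeta> y powr \<alpha>) * (ln (\<rho> y powr \<alpha>) - ln (\<zeta> y powr \<alpha>))) \<partial>lborel)"
  unfolding D_react_def
proof (rule nn_integral_cong)
  fix y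
  have "0 \<le> (\<rho> y powr \<alpha> - \<zeta> y powr \<alpha>) * (ln (\<rho> y powr \<alpha>) - ln (\<zeta> y powr \<alpha>))"
    using assms(2,3)[of y] by (intro diff_mult_ln_diff_nonneg) auto
  then show "ennreal (k * U y powr \<alpha>) * Gam (\<rho> y powr \<alpha>) (\<zeta> y powr \<alpha>)
      = k * U y powr \<alpha> * ((\<rho> y powr \<alpha> - \<zeta> y powr \<alpha>) * (ln (\<rho> y powr \<alpha>) - ln (\<zeta> y powr \<alpha>)))"
    using assms(1) assms(2,3)[of y] by (simp add: Gam_def ennreal_mult)
qed

lemma K2_mult_eq_nn_integral:
  fixes k \<alpha> E :: real and U \<Lambda> :: "real \<Rightarrow> real"
  assumes "0 < k" "1 < \<alpha>" "0 \<le> E" "U \<in> borel_measurable borel" "\<Lambda> \<in> borel_measurable borel"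
  shows "K2 k \<alpha> U \<Lambda> * ennreal E = (\<integral>\<^sup>+ y. c_tilde \<alpha> / k powr (1 / (\<alpha> - 1)) * E
           * \<bar>\<alpha> * \<Lambda> y / U y\<bar> powr (\<alpha> / (\<alpha> - 1)) \<partial>lborel)"
proof -
  define C where "C = c_tilde \<alpha> / k powr (1 / (\<alpha> - 1))"
  have "0 \<le> C" using assms(1,2) by (simp add: C_def c_tilde_def)
  have "(\<lambda>y. \<bar>\<alpha> * \<Lambda> y / U y\<bar> powr (\<alpha> / (\<alpha> - 1))) \<in> borel_measurable borel"
    using assms(4,5) by measurable
  then show ?thesis
    unfolding K2_def C_def[symmetric] using \<open>0 \<le> C\<close> \<open>0 \<le> E\<close>
    by (simp add: ennreal_mult nn_integral_cmult mult_ac)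
qed

theorem mainTheorem9:
  fixes d1 d2 k \<alpha> \<beta> Am Ap \<tau> :: real
    and U V \<Lambda> \<rho> \<zeta> :: "real \<Rightarrow> real"
  assumes "d1 > 0" "d2 > 0" "k > 0" "Am > 0" "Ap > 0"
    and "\<alpha> = \<beta>" "\<alpha> \<ge> 2"
    and "similarity_profile d1 d2 \<alpha> \<beta> Am Ap U V \<Lambda>"
    and "\<tau> \<ge> 0"
    and "\<rho> \<in> borel_measurable lborel" "\<zeta> \<in> borel_measurable lborel"
    and "\<forall>y. \<rho> y > 0" "\<forall>y. \<zeta> y > 0"
    and "integrable lborel (I_Lambda_integrand \<alpha> \<beta> \<Lambda> \<rho> \<zeta>)"
  shows "ereal (I_Lambda \<alpha> \<beta> \<Lambda> \<rho> \<zeta>) - ereal (exp \<tau>) * enn2ereal (D_react k \<alpha> \<beta> U \<rho> \<zeta>)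
           \<le> enn2ereal (K2 k \<alpha> U \<Lambda>) * ereal (exp (- \<tau> / (\<alpha> - 1)))"
proof -
  have \<rho>_pos: "\<And>y. 0 < \<rho> y" and \<zeta>_pos: "\<And>y. 0 < \<zeta> y" and U_pos: "\<And>y. 0 < U y"
    using assms(8,12,13) unfolding similarity_profile_def by auto
  have U_meas: "U \<in> borel_measurable borel" and \<Lambda>_meas: "\<Lambda> \<in> borel_measurable borel"
    using similarity_profile_borel_measurable[OF assms(8)] assms(7) by auto
  define E where "E = exp (- \<tau> / (\<alpha> - 1))"
  define g where "g y = k * U y powr \<alpha>
    * ((\<rho> y powr \<alpha> - \<zeta> y powr \<alpha>) * (ln (\<rho> y powr \<alpha>) - ln (\<zeta> y powr \<alpha>)))" for y
  define h where "h y = c_tilde \<alpha> / k powr (1 / (\<alpha> - 1)) * E * \<bar>\<alpha> * \<Lambda> y / U y\<bar> powr (\<alpha> / (\<alpha> - 1))" for y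
  have "0 < k" "0 \<le> k" "1 < \<alpha>" "0 \<le> E" using assms(3,7) by (simp_all add: E_def)
  have "ereal (I_Lambda \<alpha> \<alpha> \<Lambda> \<rho> \<zeta>) - ereal (exp \<tau>) * enn2ereal (\<integral>\<^sup>+ y. g y \<partial>lborel)
      \<le> enn2ereal (\<integral>\<^sup>+ y. h y \<partial>lborel)"
    unfolding I_Lambda_def
  proof (rule integral_minus_nn_integral_le)
    show "I_Lambda_integrand \<alpha> \<alpha> \<Lambda> \<rho> \<zeta> y \<le> exp \<tau> * g y + h y" for y
      unfolding I_Lambda_integrand_def g_def h_def E_def
      using mixed_term_le_reaction_plus_remainder assms(3,7) U_pos \<rho>_pos \<zeta>_pos by blast
    show "0 \<le> g y" for y
      unfolding g_def using assms(3) \<rho>_pos[of y] \<zeta>_pos[of y]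
      by (intro mult_nonneg_nonneg diff_mult_ln_diff_nonneg) auto
  qed (use assms(3,7,10,11) U_meas \<Lambda>_meas in \<open>auto simp: g_def h_def E_def c_tilde_def\<close>)
  moreover have "enn2ereal (K2 k \<alpha> U \<Lambda>) * ereal E = enn2ereal (K2 k \<alpha> U \<Lambda> * ennreal E)"
    using \<open>0 \<le> E\<close> by (simp add: times_ennreal.rep_eq)
  ultimately show ?thesis
    unfolding \<open>\<alpha> = \<beta>\<close>[symmetric] E_def[symmetric]
      K2_mult_eq_nn_integral[OF \<open>0 < k\<close> \<open>1 < \<alpha>\<close> \<open>0 \<le> E\<close> U_meas \<Lambda>_meas]
      D_react_eq_nn_integral[OF \<open>0 \<le> k\<close> \<rho>_pos \<zeta>_pos] g_def h_def
    by simp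
qed

end
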